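(* Consider $\min_{x\in\mathbb{R}^p,z\in\mathbb{R}^N}F(x,z):=f(x,z)+g(x)+h(z)$, where: (i) $f$ is differentiable with $M$-Lipschitz joint gradient, i.e. $\|(\nabla_xf(x_1,z_1)-\nabla_xf(x_2,z_2),\nabla_zf(x_1,z_1)-\nabla_zf(x_2,z_2))\|\le M\|(x_1-x_2,z_1-z_2)\|$ for all arguments and some $M>0$, and $g:\mathbb{R}^p\to\mathbb{R}\cup\{\infty\}$, $h:\mathbb{R}^N\to\mathbb{R}\cup\{\infty\}$ are proper, lower semicontinuous and directionally differentiable; (ii) $F$ is bounded below; (iii) $g$ and $h$ are prox-bounded, i.e. $g+\frac\eta2\|\cdot\|^2$ and $h+\frac\eta2\|\cdot\|^2$ are bounded below for some $\eta>0$. Let $\{(x_t,z_t):t\ge0\}$ be generated by the following algorithm (GPALM), run indefinitely: fix an integer $r\ge1$, $\rho_1,\rho_2>1$, $\sigma_1,\sigma_2\in(0,1)$, $0<\underline\eta\le\overline\eta$, a starting point $(x_0,z_0)$, and $\hat\eta_0^x=\hat\eta_0^z=1$. At iteration $t$, for $l=0,1,2,\dots$ set $\eta_t^x=\rho_1^l\hat\eta_t^x$, $\eta_t^z=\rho_2^l\hat\eta_t^z$ and compute $$x_{t+1}\in\operatorname{Prox}_{g/\eta_t^x}\Big(x_t-\tfrac1{\eta_t^x}\nabla_xf(x_t,z_t)\Big),\quad z_{t+1}\in\operatorname{Prox}_{h/\eta_t^z}\Big(z_t-\tfrac1{\eta_t^z}\nabla_zf(x_{t+1},z_t)\Big),$$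 stopping at the first $l$ for which $$F(x_{t+1},z_{t+1})\le\max\{F(x_{t-r+1},z_{t-r+1}),\dots,F(x_t,z_t)\}-\tfrac{\sigma_1}2\eta_t^x\|x_{t+1}-x_t\|^2-\tfrac{\sigma_2}2\eta_t^z\|z_{t+1}-z_t\|^2$$ (only indices $\ge0$ in the maximum). Then set $$\hat\eta_{t+1}^x=\min\Big\{\overline\eta,\max\Big\{\underline\eta,\tfrac{\langle x_{t+1}-x_t,\nabla_xf(x_{t+1},z_{t+1})-\nabla_xf(x_t,z_t)\rangle}{\|x_{t+1}-x_t\|^2}\Big\}\Big\},$$ $$\hat\eta_{t+1}^z=\min\Big\{\overline\eta,\max\Big\{\underline\eta,\tfrac{\langle z_{t+1}-z_t,\nabla_zf(x_{t+1},z_{t+1})-\nabla_zf(x_{t+1},z_t)\rangle}{\|z_{t+1}-z_t\|^2}\Big\}\Big\}.$$ If the generated sequence is bounded and $F$ is continuous on a compact set containing the sequence, then $\lim_{t\to\infty}\|x_{t+1}-x_t\|=0$ and $\lim_{t\to\infty}\|z_{t+1}-z_t\|=0$.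
   Context: $\|\cdot\|$ is the Euclidean norm. $\operatorname{Prox}_{\phi/\eta}(y):=\operatorname{argmin}_u\{\tfrac1\eta\phi(u)+\tfrac12\|u-y\|^2\}$. The directional derivative is $\phi'(u;d):=\lim_{\tau\to+0}\frac{\phi(u+\tau d)-\phi(u)}{\tau}$ (possibly $+\infty$). *)

theory Defs
  imports "HOL-Analysis.Analysis"
begin

text \<open>Extended-real-valued functions R^n -> R \<union> {+\<infinity>} are modelled as maps into ereal
  that never take the value -\<infinity>.\<close>

definition proper_fun :: "('a \<Rightarrow> ereal) \<Rightarrow> bool" where
  "proper_fun \<phi> \<longleftrightarrow> (\<forall>u. \<phi> u \<noteq> -\<infinity>) \<and> (\<exists>u. \<phi> u \<noteq> \<infinity>)"

definition lsc_fun :: "('a::topological_space \<Rightarrow> ereal) \<Rightarrow> bool" where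
  "lsc_fun \<phi> \<longleftrightarrow> (\<forall>u c. c < \<phi> u \<longrightarrow> (\<forall>\<^sub>F v in at u. c < \<phi> v))"

definition dir_differentiable :: "('a::real_normed_vector \<Rightarrow> ereal) \<Rightarrow> bool" where
  "dir_differentiable \<phi> \<longleftrightarrow>
     (\<forall>u d. \<bar>\<phi> u\<bar> \<noteq> \<infinity> \<longrightarrow>
        (\<exists>L. L \<noteq> -\<infinity> \<and>
           ((\<lambda>\<tau>. (\<phi> (u + \<tau> *\<^sub>R d) - \<phi> u) / ereal \<tau>) \<longlongrightarrow> L) (at_right 0)))"

definition prox_bounded :: "('a::real_normed_vector \<Rightarrow> ereal) \<Rightarrow> bool" where
  "prox_bounded \<phi> \<longleftrightarrow> (\<exists>\<eta>>0. \<exists>B. \<forall>u. ereal B \<le> \<phi> u + ereal (\<eta> / 2 * (norm u)\<^sup>2))"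

definition prox :: "('a::real_normed_vector \<Rightarrow> ereal) \<Rightarrow> real \<Rightarrow> 'a \<Rightarrow> 'a set" where
  "prox \<phi> \<eta> y = {u. \<forall>v. \<phi> u / ereal \<eta> + ereal ((norm (u - y))\<^sup>2 / 2)
                         \<le> \<phi> v / ereal \<eta> + ereal ((norm (v - y))\<^sup>2 / 2)}"

end

theory Submission
  imports Defs
begin

(* Because the step sizes stay above min 1 eta_lo, the acceptance test yields the nonmonotone
   descent of Grippo, Lampariello and Lucidi: F(p(t+1)) is at most the maximum of the last r
   values minus c ||p(t+1) - p(t)||^2. The window maxima are then eventually nonincreasing and
   converge to some L. Each window maximum is attained, and the descent forces the step just
   before a maximiser to be small, so by uniform continuity of F on the compact set the value
   there tends to L as well. Propagating this r steps backwards reaches every index, hence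
   F(p(t)) -> L, and c ||p(t+1) - p(t)||^2, being at most the window maximum minus F(p(t+1)),
   tends to 0. *)

lemma tendsto_0_if_scaled_square_le:
  fixes d u :: "'a \<Rightarrow> real"
  assumes "\<And>t. 0 \<le> d t" and "0 < c" and "\<And>t. c * (d t)\<^sup>2 \<le> u t" and "(u \<longlongrightarrow> 0) F"
  shows "(d \<longlongrightarrow> 0) F"
proof -
  have lim: "((\<lambda>t. sqrt (u t / c)) \<longlongrightarrow> 0) F"
    using tendsto_real_sqrt[OF tendsto_divide_zero[OF assms(4), where c=c]] by simp
  have "norm (d t) \<le> sqrt (u t / c)" for t
  proof -
    have "(d t)\<^sup>2 \<le> u t / c"
      using assms(3)[of t] assms(2) by (simp add: field_simps)
    then have "sqrt ((d t)\<^sup>2) \<le> sqrt (u t / c)"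
      by (rule real_sqrt_le_mono)
    then show ?thesis using assms(1)[of t] by simp
  qed
  then show ?thesis
    by (intro Lim_null_comparison[OF always_eventually lim]) simp
qed

lemma uniformly_continuous_on_subset:
  fixes f :: "'a::metric_space \<Rightarrow> 'b::metric_space"
  assumes "uniformly_continuous_on T f" and "S \<subseteq> T"
  shows "uniformly_continuous_on S f"
  unfolding uniformly_continuous_on_def
proof (intro allI impI)
  fix e :: real assume "0 < e"
  then obtain d where d: "0 < d" "\<forall>x\<in>T. \<forall>x'\<in>T. dist x' x < d \<longrightarrow> dist (f x') (f x) < e"
    using assms(1) unfolding uniformly_continuous_on_def by blast
  show "\<exists>d>0. \<forall>x\<in>S. \<forall>x'\<in>S. dist x' x < d \<longrightarrow> dist (f x') (f x) < e"
  proof (intro exI[of _ d] conjI ballI impI)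
    fix x x' assume "x \<in> S" "x' \<in> S" "dist x' x < d"
    with d(2) assms(2) show "dist (f x') (f x) < e"
      by (simp add: subset_iff)
  qed (rule d(1))
qed

definition window :: "nat \<Rightarrow> nat \<Rightarrow> nat set" where
  "window r t = {j. t < j + r \<and> j \<le> t}"

lemma finite_window [simp]: "finite (window r t)"
  by (rule finite_subset[of _ "{..t}"]) (auto simp: window_def)

lemma self_in_window: "1 \<le> r \<Longrightarrow> t \<in> window r t"
  by (auto simp: window_def)

lemma le_Max_initial_window:
  fixes v :: "nat \<Rightarrow> 'b::linorder"
  assumes r: "1 \<le> r" and nonincr: "\<And>t. r \<le> t \<Longrightarrow> v (Suc t) \<le> Max (v ` window r t)"
    and "1 \<le> t"
  shows "v t \<le> Max (v ` {1..r})"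
  using \<open>1 \<le> t\<close>
proof (induction t rule: less_induct)
  case (less t)
  show ?case
  proof (cases "t \<le> r")
    case True
    then show ?thesis using less.prems by (intro Max_ge) auto
  next
    case False
    then obtain s where s: "t = Suc s" "r \<le> s" by (cases t) auto
    have "v j \<le> Max (v ` {1..r})" if "j \<in> window r s" for j
      using that s r by (intro less.IH) (auto simp: window_def)
    then have "Max (v ` window r s) \<le> Max (v ` {1..r})"
      using self_in_window[OF r] by (subst Max_le_iff) auto
    then show ?thesis using nonincr[OF s(2)] s(1) by simp
  qed
qed

lemma ereal_bounded_by_initial_window:
  fixes v :: "nat \<Rightarrow> ereal"
  assumes r: "1 \<le> r" and nonincr: "\<And>t. r \<le> t \<Longrightarrow> v (Suc t) \<le> Max (v ` window r t)"
    and finite_values: "\<And>t. v (Suc t) \<noteq> \<infinity>"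
  obtains C where "\<And>t. 1 \<le> t \<Longrightarrow> v t \<le> ereal C"
proof -
  have "Max (v ` {1..r}) \<in> v ` {1..r}"
    using r by (intro Max_in) auto
  then obtain j where "j \<in> {1..r}" "Max (v ` {1..r}) = v j"
    by blast
  then have "Max (v ` {1..r}) \<noteq> \<infinity>"
    using finite_values[of "j - 1"] by simp
  then obtain C where C: "Max (v ` {1..r}) \<le> ereal C"
    by (cases "Max (v ` {1..r})") auto
  have "v t \<le> ereal C" if "1 \<le> t" for t
    using le_Max_initial_window[OF r nonincr that] C by (rule order_trans)
  then show ?thesis
    by (rule that)
qed

locale nonmonotone_descent =
  fixes p :: "nat \<Rightarrow> 'a::metric_space" and G :: "'a \<Rightarrow> real" and r N :: nat and c :: real
  assumes memory_pos: "1 \<le> r" and c_pos: "0 < c"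
    and descent: "\<And>t. N \<le> t \<Longrightarrow>
      G (p (Suc t)) \<le> Max ((\<lambda>j. G (p j)) ` window r t) - c * (dist (p (Suc t)) (p t))\<^sup>2"
    and bdd_below_values: "bdd_below (range (\<lambda>t. G (p t)))"
    and uniformly_continuous: "uniformly_continuous_on (range p) G"
begin

definition window_max :: "nat \<Rightarrow> real" where
  "window_max t = Max ((\<lambda>j. G (p j)) ` window r t)"

lemma window_max_ge: "j \<in> window r t \<Longrightarrow> G (p j) \<le> window_max t"
  by (auto simp: window_max_def intro!: Max_ge)

lemma window_max_attained: "\<exists>j\<in>window r t. G (p j) = window_max t"
proof -
  have "window_max t \<in> (\<lambda>j. G (p j)) ` window r t"
    unfolding window_max_def using self_in_window[OF memory_pos] by (intro Max_in) auto
  then show ?thesis by force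
qed

lemma descent_window_max:
  "N \<le> t \<Longrightarrow> c * (dist (p (Suc t)) (p t))\<^sup>2 \<le> window_max t - G (p (Suc t))"
  using descent unfolding window_max_def by force

lemma window_max_Suc_le:
  assumes "N \<le> t"
  shows "window_max (Suc t) \<le> window_max t"
proof -
  have "G (p j) \<le> window_max t" if "j \<in> window r (Suc t)" for j
  proof (cases "j = Suc t")
    case True
    have "0 \<le> c * (dist (p (Suc t)) (p t))\<^sup>2" using c_pos by simp
    with descent_window_max[OF assms] show ?thesis unfolding True by linarith
  next
    case False
    with that have "j \<in> window r t" by (auto simp: window_def)
    then show ?thesis by (rule window_max_ge)
  qed
  then show ?thesis
    unfolding window_max_def[of "Suc t"] using self_in_window[OF memory_pos]
    by (subst Max_le_iff) auto
qed

lemma window_max_tendsto: "window_max \<longlonglongrightarrow> lim window_max"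
proof -
  obtain B where B: "\<And>t. B \<le> G (p t)"
    using bdd_below_values by (auto simp: bdd_below_def)
  have "\<forall>n. B \<le> window_max (n + N)"
    using B window_max_ge[OF self_in_window[OF memory_pos]] order_trans by blast
  moreover have "decseq (\<lambda>n. window_max (n + N))"
    by (rule decseq_SucI) (simp add: window_max_Suc_le)
  ultimately obtain L where "(\<lambda>n. window_max (n + N)) \<longlonglongrightarrow> L"
    by (metis decseq_convergent)
  then have "window_max \<longlonglongrightarrow> L"
    by (rule LIMSEQ_offset)
  then show ?thesis
    by (simp add: limI)
qed

lemma dist_Suc_tendsto_0_along:
  assumes "\<And>t. N \<le> s t" and s: "filterlim s sequentially sequentially"
    and "(\<lambda>t. G (p (Suc (s t)))) \<longlonglongrightarrow> lim window_max"
  shows "(\<lambda>t. dist (p (Suc (s t))) (p (s t))) \<longlonglongrightarrow> 0"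
proof (rule tendsto_0_if_scaled_square_le[OF _ c_pos])
  have "(\<lambda>t. window_max (s t) - G (p (Suc (s t)))) \<longlonglongrightarrow> lim window_max - lim window_max"
    using filterlim_compose[OF window_max_tendsto s] assms(3) by (rule tendsto_diff)
  then show "(\<lambda>t. window_max (s t) - G (p (Suc (s t)))) \<longlonglongrightarrow> 0"
    by simp
  show "c * (dist (p (Suc (s t))) (p (s t)))\<^sup>2 \<le> window_max (s t) - G (p (Suc (s t)))" for t
    using assms(1) by (rule descent_window_max)
qed simp

lemma value_tendsto_along:
  assumes "\<And>t. N \<le> s t" and "filterlim s sequentially sequentially"
    and "(\<lambda>t. G (p (Suc (s t)))) \<longlonglongrightarrow> lim window_max"
  shows "(\<lambda>t. G (p (s t))) \<longlonglongrightarrow> lim window_max"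
proof -
  have "(\<lambda>t. dist (p (s t)) (p (Suc (s t)))) \<longlonglongrightarrow> 0"
    using dist_Suc_tendsto_0_along[OF assms] by (simp add: dist_commute)
  then have "(\<lambda>t. dist (G (p (s t))) (G (p (Suc (s t))))) \<longlonglongrightarrow> 0"
    using uniformly_continuous unfolding uniformly_continuous_on_sequentially
    by (elim allE[of _ "\<lambda>t. p (s t)"] allE[of _ "\<lambda>t. p (Suc (s t))"]) simp
  then have "(\<lambda>t. G (p (s t)) - G (p (Suc (s t)))) \<longlonglongrightarrow> 0"
    by (simp add: dist_real_def tendsto_rabs_zero_iff)
  from tendsto_add[OF this assms(3)] show ?thesis
    by simp
qed

lemma tendsto_before_window_argmax:
  assumes a: "\<And>t. a t \<in> window r (t + K)" "\<And>t. G (p (a t)) = window_max (t + K)"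
    and K: "N + 2 * r \<le> K" and "j \<le> r"
  shows "(\<lambda>t. G (p (a t - j))) \<longlonglongrightarrow> lim window_max"
  using \<open>j \<le> r\<close>
proof (induction j)
  case 0
  show ?case
    using LIMSEQ_ignore_initial_segment[OF window_max_tendsto, of K] by (simp add: a(2))
next
  case (Suc j)
  have shift: "Suc (a t - Suc j) = a t - j" and late: "t + N \<le> a t - Suc j" for t
    using a(1)[of t] K Suc.prems by (auto simp: window_def)
  have "filterlim (\<lambda>t. a t - Suc j) sequentially sequentially"
    using late by (intro filterlim_at_top_mono[OF filterlim_add_const_nat_at_top[of N]] always_eventually) blast
  moreover have "N \<le> a t - Suc j" for t
    using late[of t] by simp
  ultimately show ?case
    using value_tendsto_along[of "\<lambda>t. a t - Suc j"] Suc by (simp add: shift)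
qed

lemma value_tendsto: "(\<lambda>t. G (p t)) \<longlonglongrightarrow> lim window_max"
proof -
  define K where "K = N + 2 * r"
  have "\<exists>a. \<forall>t. a t \<in> window r (t + K) \<and> G (p (a t)) = window_max (t + K)"
    using window_max_attained by (intro choice) blast
  then obtain a where a: "\<And>t. a t \<in> window r (t + K)" "\<And>t. G (p (a t)) = window_max (t + K)"
    by blast
  \<comment> \<open>s + K is among the last r indices of the window ending at s + r - 1 + K\<close>
  have split: "\<exists>j<r. a (s + (r - 1)) - j = s + K" for s
    using a(1)[of "s + (r - 1)"] memory_pos
    by (intro exI[of _ "a (s + (r - 1)) - (s + K)"]) (auto simp: window_def)
  have "(\<lambda>s. G (p (s + K)) - lim window_max) \<longlonglongrightarrow> 0"
  proof (rule Lim_null_comparison[OF always_eventually])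
    show "\<forall>s. norm (G (p (s + K)) - lim window_max)
             \<le> (\<Sum>j<r. \<bar>G (p (a (s + (r - 1)) - j)) - lim window_max\<bar>)"
    proof
      fix s
      obtain j where j: "j < r" "a (s + (r - 1)) - j = s + K"
        using split by blast
      then have "norm (G (p (s + K)) - lim window_max) = \<bar>G (p (a (s + (r - 1)) - j)) - lim window_max\<bar>"
        by simp
      also have "\<dots> \<le> (\<Sum>j<r. \<bar>G (p (a (s + (r - 1)) - j)) - lim window_max\<bar>)"
        by (rule member_le_sum) (use j in auto)
      finally show "norm (G (p (s + K)) - lim window_max)
          \<le> (\<Sum>j<r. \<bar>G (p (a (s + (r - 1)) - j)) - lim window_max\<bar>)" .
    qed
    show "(\<lambda>s. \<Sum>j<r. \<bar>G (p (a (s + (r - 1)) - j)) - lim window_max\<bar>) \<longlonglongrightarrow> 0"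
    proof (intro tendsto_null_sum tendsto_rabs_zero)
      fix j assume "j \<in> {..<r}"
      then have "j \<le> r" by simp
      have "(\<lambda>t. G (p (a t - j))) \<longlonglongrightarrow> lim window_max"
        by (rule tendsto_before_window_argmax[OF a _ \<open>j \<le> r\<close>]) (simp add: K_def)
      from LIMSEQ_ignore_initial_segment[OF this, of "r - 1"]
      show "(\<lambda>s. G (p (a (s + (r - 1)) - j)) - lim window_max) \<longlonglongrightarrow> 0"
        by (rule LIM_zero)
    qed
  qed
  then have "(\<lambda>s. G (p (s + K))) \<longlonglongrightarrow> lim window_max"
    by (rule LIM_zero_cancel)
  then show ?thesis
    by (rule LIMSEQ_offset)
qed

theorem dist_Suc_tendsto_0: "(\<lambda>t. dist (p (Suc t)) (p t)) \<longlonglongrightarrow> 0"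
proof -
  have "(\<lambda>t. G (p (Suc (t + N)))) \<longlonglongrightarrow> lim window_max"
    using LIMSEQ_ignore_initial_segment[OF value_tendsto, of "Suc N"] by simp
  then have "(\<lambda>t. dist (p (Suc (t + N))) (p (t + N))) \<longlonglongrightarrow> 0"
    by (intro dist_Suc_tendsto_0_along filterlim_add_const_nat_at_top) simp
  then show ?thesis
    by (rule LIMSEQ_offset)
qed

end

lemma uniformly_continuous_truncation:
  fixes F :: "'a::metric_space \<Rightarrow> ereal"
  assumes "compact K" and "continuous_on K F" and lower: "\<And>q. ereal B \<le> F q"
  obtains G where "uniformly_continuous_on K G"
    and "\<And>q. F q \<le> ereal C \<Longrightarrow> F q = ereal (G q)" and "\<And>q. min B C \<le> G q"
proof
  define G where "G q = real_of_ereal (min (F q) (ereal C))" for q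
  have min_finite: "\<bar>min (F q) (ereal C)\<bar> \<noteq> \<infinity>" for q
    using lower[of q] by (cases "F q") (auto simp: min_def)
  have "continuous_on K (\<lambda>q. min (F q) (ereal C))"
    by (intro continuous_on_min assms(2) continuous_on_const)
  then have "continuous_on K G"
    unfolding continuous_on_iff_real[OF min_finite] by (simp add: G_def comp_def)
  then show "uniformly_continuous_on K G"
    using assms(1) by (rule compact_uniformly_continuous)
  show "F q = ereal (G q)" if "F q \<le> ereal C" for q
    using that min_finite[of q] by (simp add: G_def min_absorb1 ereal_real')
  show "min B C \<le> G q" for q
    using lower[of q] min_finite[of q] unfolding G_def
    by (cases "F q") (auto simp: min_def)
qed

lemma nonmonotone_descent_ereal:
  fixes F :: "'a::metric_space \<Rightarrow> ereal" and p :: "nat \<Rightarrow> 'a"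
  assumes r: "1 \<le> r" and c: "0 < c"
    and descent: "\<And>t. F (p (Suc t))
      \<le> Max ((\<lambda>j. F (p j)) ` window r t) - ereal (c * (dist (p (Suc t)) (p t))\<^sup>2)"
    and finite_values: "\<And>t. F (p (Suc t)) \<noteq> \<infinity>"
    and lower: "\<And>q. ereal B \<le> F q"
    and K: "compact K" "range p \<subseteq> K" "continuous_on K F"
  shows "(\<lambda>t. dist (p (Suc t)) (p t)) \<longlonglongrightarrow> 0"
proof -
  have nonincr: "F (p (Suc t)) \<le> Max ((\<lambda>j. F (p j)) ` window r t)" for t
  proof -
    have "0 \<le> ereal (c * (dist (p (Suc t)) (p t))\<^sup>2)"
      using c by simp
    from descent[of t] ereal_diff_le_self[OF this] show ?thesis
      by (rule order_trans)
  qed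
  obtain C where below_C: "\<And>t. 1 \<le> t \<Longrightarrow> F (p t) \<le> ereal C"
    using ereal_bounded_by_initial_window[of r "\<lambda>t. F (p t)", OF r nonincr finite_values] by blast
  \<comment> \<open>truncating at C turns F into a real function without changing it along the sequence\<close>
  obtain G where unif: "uniformly_continuous_on K G"
    and G_eq: "\<And>q. F q \<le> ereal C \<Longrightarrow> F q = ereal (G q)" and G_lower: "\<And>q. min B C \<le> G q"
    using uniformly_continuous_truncation[OF K(1,3) lower] by blast
  have "G (p (Suc t)) \<le> Max ((\<lambda>j. G (p j)) ` window r t) - c * (dist (p (Suc t)) (p t))\<^sup>2"
    if "r \<le> t" for t
  proof -
    have "F (p j) \<le> ereal (Max ((\<lambda>j. G (p j)) ` window r t))" if "j \<in> window r t" for j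
    proof -
      have "1 \<le> j"
        using that \<open>r \<le> t\<close> by (auto simp: window_def)
      then have "F (p j) = ereal (G (p j))"
        by (intro G_eq below_C)
      also have "\<dots> \<le> ereal (Max ((\<lambda>j. G (p j)) ` window r t))"
        using that by (simp add: Max_ge)
      finally show ?thesis .
    qed
    then have "Max ((\<lambda>j. F (p j)) ` window r t) \<le> ereal (Max ((\<lambda>j. G (p j)) ` window r t))"
      using self_in_window[OF r] by (subst Max_le_iff) auto
    with descent[of t] have "F (p (Suc t))
        \<le> ereal (Max ((\<lambda>j. G (p j)) ` window r t)) - ereal (c * (dist (p (Suc t)) (p t))\<^sup>2)"
      by (meson ereal_minus_mono order_refl order_trans)
    then show ?thesis
      using G_eq[OF below_C[of "Suc t"]] by simp
  qed
  moreover have "bdd_below (range (\<lambda>t. G (p t)))"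
    by (rule bdd_belowI2) (rule G_lower)
  moreover have "uniformly_continuous_on (range p) G"
    using unif K(2) by (rule uniformly_continuous_on_subset)
  ultimately interpret nonmonotone_descent p G r r c
    using r c by unfold_locales
  show ?thesis
    by (rule dist_Suc_tendsto_0)
qed

lemma blockwise_decrease_le:
  fixes X :: ereal and u :: "'a::real_normed_vector" and v :: "'b::real_normed_vector"
  assumes "0 < \<eta>" "\<eta> \<le> \<eta>u" "\<eta> \<le> \<eta>v" "0 \<le> \<sigma>1" "0 \<le> \<sigma>2"
  shows "X - ereal (\<sigma>1 / 2 * \<eta>u * (norm u)\<^sup>2) - ereal (\<sigma>2 / 2 * \<eta>v * (norm v)\<^sup>2)
    \<le> X - ereal (min \<sigma>1 \<sigma>2 / 2 * \<eta> * (norm (u, v))\<^sup>2)"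
proof -
  have "min \<sigma>1 \<sigma>2 / 2 * \<eta> * (norm (u, v))\<^sup>2
      = min \<sigma>1 \<sigma>2 / 2 * \<eta> * (norm u)\<^sup>2 + min \<sigma>1 \<sigma>2 / 2 * \<eta> * (norm v)\<^sup>2"
    by (simp add: norm_Pair distrib_left)
  also have "\<dots> \<le> \<sigma>1 / 2 * \<eta>u * (norm u)\<^sup>2 + \<sigma>2 / 2 * \<eta>v * (norm v)\<^sup>2"
    using assms by (intro add_mono mult_right_mono mult_mono) auto
  finally show ?thesis
    by (cases X) auto
qed

lemma prox_value_finite:
  fixes \<phi> :: "'a::real_normed_vector \<Rightarrow> ereal"
  assumes "proper_fun \<phi>" and "0 < \<eta>" and "u \<in> prox \<phi> \<eta> y"
  shows "\<bar>\<phi> u\<bar> \<noteq> \<infinity>"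
proof -
  obtain v where v: "\<phi> v \<noteq> \<infinity>" and not_minf: "\<And>w. \<phi> w \<noteq> -\<infinity>"
    using assms(1) unfolding proper_fun_def by blast
  have "\<phi> u / ereal \<eta> + ereal ((norm (u - y))\<^sup>2 / 2) \<le> \<phi> v / ereal \<eta> + ereal ((norm (v - y))\<^sup>2 / 2)"
    using assms(3) unfolding prox_def by blast
  then have "\<phi> u \<noteq> \<infinity>"
    using v not_minf[of v] assms(2) by (cases "\<phi> v") auto
  with not_minf[of u] show ?thesis
    by (cases "\<phi> u") auto
qed

lemma clamped_step_ge:
  fixes \<eta>h :: "nat \<Rightarrow> real"
  assumes "\<eta>h 0 = 1" and "\<And>t. \<eta>h (Suc t) = min \<eta>up (max \<eta>lo (q t))"
    and "0 < \<eta>lo" and "\<eta>lo \<le> \<eta>up" and "1 \<le> \<rho>"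
  shows "min 1 \<eta>lo \<le> \<rho> ^ k * \<eta>h t"
proof -
  have "min 1 \<eta>lo \<le> \<eta>h t"
    using assms(1-4) by (cases t) auto
  also have "\<dots> \<le> \<rho> ^ k * \<eta>h t"
    using assms(3,5) \<open>min 1 \<eta>lo \<le> \<eta>h t\<close>
    by (intro mult_le_cancel_right1[THEN iffD2]) auto
  finally show ?thesis .
qed

theorem lemma3:
  fixes f :: "'a::euclidean_space \<times> 'b::euclidean_space \<Rightarrow> real"
    and gx :: "'a \<times> 'b \<Rightarrow> 'a" and gz :: "'a \<times> 'b \<Rightarrow> 'b"
    and g :: "'a \<Rightarrow> ereal" and h :: "'b \<Rightarrow> ereal"
    and M :: real and r :: nat
    and \<rho>1 \<rho>2 \<sigma>1 \<sigma>2 \<eta>lo \<eta>up :: real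
    and x :: "nat \<Rightarrow> 'a" and z :: "nat \<Rightarrow> 'b"
    and \<eta>hx \<eta>hz :: "nat \<Rightarrow> real" and l :: "nat \<Rightarrow> nat"
  defines "F \<equiv> (\<lambda>p. ereal (f p) + g (fst p) + h (snd p))"
  assumes grad: "\<And>p. (f has_derivative (\<lambda>d. gx p \<bullet> fst d + gz p \<bullet> snd d)) (at p)"
    and M_pos: "M > 0"
    and lip: "\<And>p q. norm (gx p - gx q, gz p - gz q) \<le> M * norm (p - q)"
    and g_prop: "proper_fun g" "lsc_fun g" "dir_differentiable g"
    and h_prop: "proper_fun h" "lsc_fun h" "dir_differentiable h"
    and F_bdd: "\<exists>B. \<forall>p. ereal B \<le> F p"
    and g_pb: "prox_bounded g" and h_pb: "prox_bounded h"
    and r: "r \<ge> 1"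
    and \<rho>: "\<rho>1 > 1" "\<rho>2 > 1"
    and \<sigma>: "0 < \<sigma>1" "\<sigma>1 < 1" "0 < \<sigma>2" "\<sigma>2 < 1"
    and \<eta>bnds: "0 < \<eta>lo" "\<eta>lo \<le> \<eta>up"
    and init: "\<eta>hx 0 = 1" "\<eta>hz 0 = 1"
    \<comment> \<open>accepted step at iteration t with l t backtracking steps\<close>
    and step_x: "\<And>t. x (Suc t) \<in> prox g (\<rho>1 ^ l t * \<eta>hx t)
                   (x t - (1 / (\<rho>1 ^ l t * \<eta>hx t)) *\<^sub>R gx (x t, z t))"
    and step_z: "\<And>t. z (Suc t) \<in> prox h (\<rho>2 ^ l t * \<eta>hz t)
                   (z t - (1 / (\<rho>2 ^ l t * \<eta>hz t)) *\<^sub>R gz (x (Suc t), z t))"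
    and accept: "\<And>t. F (x (Suc t), z (Suc t))
                   \<le> Max {F (x j, z j) | j. t < j + r \<and> j \<le> t}
                     - ereal (\<sigma>1 / 2 * (\<rho>1 ^ l t * \<eta>hx t) * (norm (x (Suc t) - x t))\<^sup>2)
                     - ereal (\<sigma>2 / 2 * (\<rho>2 ^ l t * \<eta>hz t) * (norm (z (Suc t) - z t))\<^sup>2)"
    \<comment> \<open>l t is the first trial index at which the test is passed: every earlier trial
        produced (by the prox steps) a point failing the test\<close>
    and first: "\<And>t k. k < l t \<Longrightarrow>
                  \<exists>x' z'. x' \<in> prox g (\<rho>1 ^ k * \<eta>hx t)
                             (x t - (1 / (\<rho>1 ^ k * \<eta>hx t)) *\<^sub>R gx (x t, z t))
                        \<and> z' \<in> prox h (\<rho>2 ^ k * \<eta>hz t)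
                             (z t - (1 / (\<rho>2 ^ k * \<eta>hz t)) *\<^sub>R gz (x', z t))
                        \<and> \<not> (F (x', z')
                              \<le> Max {F (x j, z j) | j. t < j + r \<and> j \<le> t}
                                - ereal (\<sigma>1 / 2 * (\<rho>1 ^ k * \<eta>hx t) * (norm (x' - x t))\<^sup>2)
                                - ereal (\<sigma>2 / 2 * (\<rho>2 ^ k * \<eta>hz t) * (norm (z' - z t))\<^sup>2))"
    and upd_x: "\<And>t. \<eta>hx (Suc t) = min \<eta>up (max \<eta>lo
                   (((x (Suc t) - x t) \<bullet> (gx (x (Suc t), z (Suc t)) - gx (x t, z t)))
                    / (norm (x (Suc t) - x t))\<^sup>2))"
    and upd_z: "\<And>t. \<eta>hz (Suc t) = min \<eta>up (max \<eta>lo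
                   (((z (Suc t) - z t) \<bullet> (gz (x (Suc t), z (Suc t)) - gz (x (Suc t), z t)))
                    / (norm (z (Suc t) - z t))\<^sup>2))"
    and bdd: "bounded (range (\<lambda>t. (x t, z t)))"
    and F_cont: "\<exists>K. compact K \<and> range (\<lambda>t. (x t, z t)) \<subseteq> K \<and> continuous_on K F"
  shows "(\<lambda>t. norm (x (Suc t) - x t)) \<longlonglongrightarrow> 0 \<and> (\<lambda>t. norm (z (Suc t) - z t)) \<longlonglongrightarrow> 0"
proof -
  \<comment> \<open>The smoothness of f, the regularity and prox-boundedness of g and h, the minimality of
      l t and the boundedness of the iterates only serve to make the iteration well defined and
      the line search terminate, which the statement presupposes by providing x, z and l.\<close>
  define p where "p t = (x t, z t)" for t
  define \<eta>0 where "\<eta>0 = min 1 \<eta>lo"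
  define c where "c = min \<sigma>1 \<sigma>2 / 2 * \<eta>0"
  have \<eta>0_pos: "0 < \<eta>0" and c_pos: "0 < c"
    using \<eta>bnds \<sigma> by (simp_all add: \<eta>0_def c_def)
  have x_step_ge: "\<eta>0 \<le> \<rho>1 ^ l t * \<eta>hx t" and z_step_ge: "\<eta>0 \<le> \<rho>2 ^ l t * \<eta>hz t" for t
    unfolding \<eta>0_def using \<rho>
    by (intro clamped_step_ge[OF init(1) upd_x \<eta>bnds] clamped_step_ge[OF init(2) upd_z \<eta>bnds]; simp)+
  have finite_values: "F (p (Suc t)) \<noteq> \<infinity>" for t
  proof -
    have "\<bar>g (x (Suc t))\<bar> \<noteq> \<infinity>" and "\<bar>h (z (Suc t))\<bar> \<noteq> \<infinity>"
      using x_step_ge[of t] z_step_ge[of t] \<eta>0_pos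
      by (auto intro!: prox_value_finite[OF g_prop(1) _ step_x] prox_value_finite[OF h_prop(1) _ step_z])
    then show ?thesis
      by (cases "g (x (Suc t))"; cases "h (z (Suc t))") (auto simp: F_def p_def)
  qed
  have descent: "F (p (Suc t))
      \<le> Max ((\<lambda>j. F (p j)) ` window r t) - ereal (c * (dist (p (Suc t)) (p t))\<^sup>2)" for t
  proof -
    have "{F (x j, z j) | j. t < j + r \<and> j \<le> t} = (\<lambda>j. F (p j)) ` window r t"
      by (auto simp: p_def window_def)
    moreover have "F (x (Suc t), z (Suc t)) \<le> Max {F (x j, z j) | j. t < j + r \<and> j \<le> t}
        - ereal (c * (norm (x (Suc t) - x t, z (Suc t) - z t))\<^sup>2)"
      unfolding c_def by (rule order_trans[OF accept[of t] blockwise_decrease_le])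
        (use \<eta>0_pos x_step_ge[of t] z_step_ge[of t] \<sigma> in auto)
    ultimately show ?thesis
      by (simp add: p_def dist_norm)
  qed
  obtain B where "\<And>q. ereal B \<le> F q"
    using F_bdd by blast
  moreover obtain K where "compact K" "range p \<subseteq> K" "continuous_on K F"
    using F_cont unfolding p_def by blast
  ultimately have lim: "(\<lambda>t. dist (p (Suc t)) (p t)) \<longlonglongrightarrow> 0"
    by (rule nonmonotone_descent_ereal[OF r c_pos descent finite_values])
  have "norm (x (Suc t) - x t) \<le> dist (p (Suc t)) (p t)"
    and "norm (z (Suc t) - z t) \<le> dist (p (Suc t)) (p t)" for t
    using dist_fst_le[of "p (Suc t)" "p t"] dist_snd_le[of "p (Suc t)" "p t"]
    by (simp_all add: p_def dist_norm)
  then show ?thesis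
    by (simp add: Lim_null_comparison[OF always_eventually lim])
qed

end
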